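(* Consider the single-camp, two-phase problem with bias-dependent camp weights described in the context: maximize $\sum_i v_i^{(2)}$ over nonnegative vectors $\mathbf{x^{(1)}},\mathbf{x^{(2)}}\in\mathbb{R}^n$ with $\sum_i x_i^{(1)}+\sum_i x_i^{(2)}\le k_g$. Let $k_g^{(1)}=\sum_i x_i^{(1)}$ and $k_g^{(2)}=\sum_i x_i^{(2)}$. Then it is optimal to exhaust the entire budget ($k_g^{(1)}+k_g^{(2)}=k_g$), and if not, it is optimal to not invest at all ($k_g^{(1)}=k_g^{(2)}=0$). Furthermore, it is an optimal strategy to invest on at most one node in a given phase (i.e., there is an optimal solution in which each of $\mathbf{x^{(1)}}$ and $\mathbf{x^{(2)}}$ has at most one nonzero entry).
   Context: A social network has node set $N=\{1,\dots,n\}$ and a real $n\times n$ matrix $\mathbf{w}=(w_{ij})$ with $\sum_j|w_{ij}|<1$ for every $i$; write $\Delta=(\mathbf{I}-\mathbf{w})^{-1}$. Each node $i$ has an initial opinion $v_i^0$, a bias weight $w_{ii}^0$, and a total camp weight $\theta_i$. There is a single (good) camp with budget $k_g\ge 0$ choosing investments $\mathbf{x^{(1)}},\mathbf{x^{(2)}}\ge 0$ in phases 1 and 2. Opinions evolve by $\mathbf{v^{(0)}}=\mathbf{v^0}$ and for $p=1,2$: $\mathbf{v^{(p)}}=\Delta(\mathbf{w^0}\circ\mathbf{v^{(p-1)}}+\mathbf{w_g^{(p)}}\circ\mathbf{x^{(p)}})$, where $\circ$ is the entrywise product, $\mathbf{w^0}=(w_{ii}^0)_i$, and the camp's influence weight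 on node $i$ in phase $p$ depends on the node's opinion at the start of that phase: $w_{ig}^{(p)}=\theta_i\frac{1+w_{ii}^0 v_i^{(p-1)}}{2}$. *)

theory Defs
  imports "HOL-Analysis.Analysis"
begin

text \<open>Nodes are the elements of a finite type 'n; vectors are real^'n, matrices real^'n^'n.\<close>

definition Delta :: "real^'n^'n \<Rightarrow> real^'n^'n" where
  "Delta w = matrix_inv (mat 1 - w)"

definition camp_weight :: "real^'n \<Rightarrow> real^'n \<Rightarrow> real^'n \<Rightarrow> real^'n" where
  "camp_weight theta w0 v = (\<chi> i. theta$i * (1 + w0$i * v$i) / 2)"

definition phase_step ::
  "real^'n^'n \<Rightarrow> real^'n \<Rightarrow> real^'n \<Rightarrow> real^'n \<Rightarrow> real^'n \<Rightarrow> real^'n" where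
  "phase_step w w0 theta v x =
     Delta w *v (\<chi> i. w0$i * v$i + (camp_weight theta w0 v)$i * x$i)"

definition opinion2 ::
  "real^'n^'n \<Rightarrow> real^'n \<Rightarrow> real^'n \<Rightarrow> real^'n \<Rightarrow> real^'n \<Rightarrow> real^'n \<Rightarrow> real^'n" where
  "opinion2 w w0 theta v0 x1 x2 = phase_step w w0 theta (phase_step w w0 theta v0 x1) x2"

definition objective ::
  "real^'n^'n \<Rightarrow> real^'n \<Rightarrow> real^'n \<Rightarrow> real^'n \<Rightarrow> real^'n \<Rightarrow> real^'n \<Rightarrow> real" where
  "objective w w0 theta v0 x1 x2 = (\<Sum>i\<in>UNIV. (opinion2 w w0 theta v0 x1 x2)$i)"

definition feasible :: "real \<Rightarrow> real^'n \<Rightarrow> real^'n \<Rightarrow> bool" where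
  "feasible kg x1 x2 \<longleftrightarrow> (\<forall>i. x1$i \<ge> 0) \<and> (\<forall>i. x2$i \<ge> 0) \<and>
     (\<Sum>i\<in>UNIV. x1$i) + (\<Sum>i\<in>UNIV. x2$i) \<le> kg"

end

theory Submission
  imports Defs
begin

(* Each phase applies the fixed matrix Delta w to a vector that is affine both in the opinion
   at the start of the phase and in the investment, so the objective is affine in x1 for fixed
   x2 and affine in x2 for fixed x1. An affine function on the budget set
   {y >= 0, sum y <= B} is maximised at one of its vertices 0 or B e_j. Starting from an
   optimum (which exists by compactness), first replace x1 and then x2 by maximising vertices
   of the budgets they leave each other; if budget is still left over, x2 is 0, and
   re-optimising x1 over the whole budget yields a vertex that is 0 or spends everything. *)

definition affine_map :: "('a::real_vector \<Rightarrow> 'b::real_vector) \<Rightarrow> bool" where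
  "affine_map f \<longleftrightarrow> (\<exists>c L. linear L \<and> (\<forall>x. f x = c + L x))"

lemma affine_map_linear: "linear L \<Longrightarrow> affine_map L"
  unfolding affine_map_def by (intro exI[of _ 0] exI[of _ L]) simp

lemma affine_map_compose:
  assumes "affine_map f" and "affine_map g"
  shows "affine_map (\<lambda>x. f (g x))"
proof -
  obtain c L where L: "linear L" and f: "\<And>x. f x = c + L x"
    using assms(1) unfolding affine_map_def by blast
  obtain d M where M: "linear M" and g: "\<And>x. g x = d + M x"
    using assms(2) unfolding affine_map_def by blast
  have "f (g x) = (c + L d) + L (M x)" for x
    by (simp add: f g linear_add[OF L])
  then show ?thesis
    unfolding affine_map_def using linear_compose[OF M L] by (auto simp: o_def)
qed

lemma affine_map_diagonal: "affine_map (\<lambda>x::real^'n. \<chi> i. a$i + b$i * x$i)"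
proof -
  have "linear (\<lambda>x::real^'n. \<chi> i. b$i * x$i)"
    by (rule linearI) (simp_all add: vec_eq_iff algebra_simps)
  then show ?thesis
    unfolding affine_map_def by (intro exI[of _ a] exI) (auto simp: vec_eq_iff)
qed

lemma affine_map_matrix_diagonal: "affine_map (\<lambda>x::real^'n. A *v (\<chi> i. a$i + b$i * x$i))"
  by (rule affine_map_compose[OF affine_map_linear[OF matrix_vector_mul_linear] affine_map_diagonal])

definition budget_set :: "real \<Rightarrow> (real^'n) set" where
  "budget_set B = {y. (\<forall>i. 0 \<le> y$i) \<and> (\<Sum>i\<in>UNIV. y$i) \<le> B}"

lemma linear_cart_expansion:
  fixes L :: "real^'n \<Rightarrow> real"
  assumes "linear L"
  shows "L y = (\<Sum>i\<in>UNIV. y$i * L (axis i 1))"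
proof -
  have "L y = L (\<Sum>i\<in>UNIV. y$i *\<^sub>R axis i 1)"
    by (metis basis_expansion scalar_mult_eq_scaleR)
  also have "\<dots> = (\<Sum>i\<in>UNIV. L (y$i *\<^sub>R axis i 1))"
    by (rule linear_sum[OF assms])
  finally show ?thesis
    by (simp add: linear_scale[OF assms])
qed

lemma linear_max_on_budget_set:
  fixes L :: "real^'n \<Rightarrow> real"
  assumes "linear L" and "0 \<le> B"
  obtains x where "x = 0 \<or> (\<exists>j. x = axis j B)" and "\<forall>y\<in>budget_set B. L y \<le> L x"
proof -
  have "Max (range (\<lambda>i. L (axis i 1))) \<in> range (\<lambda>i. L (axis i 1))"
    by (rule Max_in) auto
  then obtain j where j_max: "Max (range (\<lambda>i. L (axis i 1))) = L (axis j 1)"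
    by (rule rangeE)
  have j: "L (axis i 1) \<le> L (axis j 1)" for i
    unfolding j_max[symmetric] by (rule Max_ge) auto
  show ?thesis
  proof (cases "L (axis j 1) \<le> 0")
    case True
    have "L y \<le> L 0" if "y \<in> budget_set B" for y
    proof -
      have "L (axis i 1) \<le> 0" for i
        using j[of i] True by linarith
      then have "(\<Sum>i\<in>UNIV. y$i * L (axis i 1)) \<le> 0"
        using that by (intro sum_nonpos mult_nonneg_nonpos) (auto simp: budget_set_def)
      then show ?thesis
        by (simp only: linear_cart_expansion[OF assms(1), of y] linear_0[OF assms(1)])
    qed
    then show ?thesis using that by blast
  next
    case False
    have "L y \<le> L (axis j B)" if "y \<in> budget_set B" for y
    proof -
      have "L y \<le> (\<Sum>i\<in>UNIV. y$i * L (axis j 1))"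
        unfolding linear_cart_expansion[OF assms(1), of y]
        using that j by (intro sum_mono mult_left_mono) (auto simp: budget_set_def)
      also have "\<dots> = (\<Sum>i\<in>UNIV. y$i) * L (axis j 1)"
        by (rule sum_distrib_right[symmetric])
      also have "\<dots> \<le> B * L (axis j 1)"
        using that False by (intro mult_right_mono) (auto simp: budget_set_def)
      also have "\<dots> = L (B *\<^sub>R axis j 1)"
        by (simp add: linear_scale[OF assms(1)])
      also have "B *\<^sub>R axis j 1 = axis j B"
        by (simp add: axis_def vec_eq_iff)
      finally show ?thesis .
    qed
    then show ?thesis using that by blast
  qed
qed

lemma affine_map_max_on_budget_set:
  fixes F :: "real^'n \<Rightarrow> real"
  assumes "affine_map F" and "0 \<le> B"
  obtains x where "x \<in> budget_set B" and "card {i. x$i \<noteq> 0} \<le> 1"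
    and "x = 0 \<or> (\<Sum>i\<in>UNIV. x$i) = B" and "\<forall>y\<in>budget_set B. F y \<le> F x"
proof -
  obtain c L where L: "linear L" and F: "\<And>y. F y = c + L y"
    using assms(1) unfolding affine_map_def by blast
  obtain x where x: "x = 0 \<or> (\<exists>j. x = axis j B)" and max: "\<forall>y\<in>budget_set B. L y \<le> L x"
    using linear_max_on_budget_set[OF L assms(2)] .
  have "x \<in> budget_set B"
    using x assms(2) by (auto simp: budget_set_def axis_def)
  moreover have "card {i. x$i \<noteq> 0} \<le> 1"
  proof -
    have "{i. x$i \<noteq> 0} \<subseteq> {j}" if "x = axis j B" for j
      using that by (auto simp: axis_def)
    then obtain J where "{i. x$i \<noteq> 0} \<subseteq> {J}"
      using x by force
    then have "card {i. x$i \<noteq> 0} \<le> card {J}"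
      by (intro card_mono) auto
    then show ?thesis
      by simp
  qed
  moreover have "x = 0 \<or> (\<Sum>i\<in>UNIV. x$i) = B"
    using x by (auto simp: axis_def)
  moreover have "\<forall>y\<in>budget_set B. F y \<le> F x"
    using max by (simp add: F)
  ultimately show ?thesis
    using that by blast
qed

lemma budget_set_sum_bounds:
  assumes "y \<in> budget_set B"
  shows "0 \<le> (\<Sum>i\<in>UNIV. y$i)" and "(\<Sum>i\<in>UNIV. y$i) \<le> B"
  using assms by (simp_all add: budget_set_def sum_nonneg)

lemma feasible_iff_budget_set:
  "feasible kg x1 x2 \<longleftrightarrow>
     x1 \<in> budget_set (kg - (\<Sum>i\<in>UNIV. x2$i)) \<and> x2 \<in> budget_set (kg - (\<Sum>i\<in>UNIV. x1$i))"
  by (auto simp: feasible_def budget_set_def)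

lemma separately_affine_vertex_improvement:
  fixes F :: "real^'n \<Rightarrow> real^'n \<Rightarrow> real"
  assumes aff1: "\<And>x2. affine_map (\<lambda>x1. F x1 x2)" and aff2: "\<And>x1. affine_map (F x1)"
    and "feasible kg a1 a2"
  shows "\<exists>x1 x2. feasible kg x1 x2 \<and> F a1 a2 \<le> F x1 x2 \<and>
           ((\<Sum>i\<in>UNIV. x1$i) + (\<Sum>i\<in>UNIV. x2$i) = kg \<or>
              ((\<Sum>i\<in>UNIV. x1$i) = 0 \<and> (\<Sum>i\<in>UNIV. x2$i) = 0)) \<and>
           card {i. x1$i \<noteq> 0} \<le> 1 \<and> card {i. x2$i \<noteq> 0} \<le> 1"
proof -
  let ?s = "\<lambda>x::real^'n. \<Sum>i\<in>UNIV. x$i"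
  have a1: "a1 \<in> budget_set (kg - ?s a2)" and a2: "a2 \<in> budget_set (kg - ?s a1)"
    using assms(3) by (simp_all add: feasible_iff_budget_set)
  have "0 \<le> kg - ?s a2"
    using budget_set_sum_bounds[OF a1] by linarith
  then obtain b1 where b1: "b1 \<in> budget_set (kg - ?s a2)" "card {i. b1$i \<noteq> 0} \<le> 1"
      and b1_max: "\<forall>y\<in>budget_set (kg - ?s a2). F y a2 \<le> F b1 a2"
    using affine_map_max_on_budget_set[OF aff1] by metis
  have a2': "a2 \<in> budget_set (kg - ?s b1)"
    using a2 budget_set_sum_bounds[OF b1(1)] by (auto simp: budget_set_def)
  have "0 \<le> kg - ?s b1"
    using budget_set_sum_bounds[OF a2'] by linarith
  then obtain b2 where b2: "b2 \<in> budget_set (kg - ?s b1)" "card {i. b2$i \<noteq> 0} \<le> 1"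
      "b2 = 0 \<or> ?s b2 = kg - ?s b1" and b2_max: "\<forall>y\<in>budget_set (kg - ?s b1). F b1 y \<le> F b1 b2"
    by (rule affine_map_max_on_budget_set[OF aff2])
  have "F a1 a2 \<le> F b1 b2"
    using b1_max a1 b2_max a2' by (meson order_trans)
  show ?thesis
  proof (cases "?s b1 + ?s b2 = kg")
    case True
    moreover have "feasible kg b1 b2"
      using b1(1) b2(1) by (auto simp: feasible_def budget_set_def)
    ultimately show ?thesis
      using \<open>F a1 a2 \<le> F b1 b2\<close> b1(2) b2(2) by blast
  next
    case False
    then have "b2 = 0"
      using b2(3) by auto
    have "b1 \<in> budget_set kg"
      using b1(1) budget_set_sum_bounds[OF a2] by (auto simp: budget_set_def)
    then have "0 \<le> kg"
      using budget_set_sum_bounds by (meson order_trans)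
    then obtain c1 where c1: "c1 \<in> budget_set kg" "card {i. c1$i \<noteq> 0} \<le> 1"
        "c1 = 0 \<or> ?s c1 = kg" and c1_max: "\<forall>y\<in>budget_set kg. F y 0 \<le> F c1 0"
      by (rule affine_map_max_on_budget_set[OF aff1])
    have "F a1 a2 \<le> F c1 0"
      using \<open>F a1 a2 \<le> F b1 b2\<close> \<open>b2 = 0\<close> c1_max \<open>b1 \<in> budget_set kg\<close> by force
    moreover have "feasible kg c1 0"
      using c1(1) by (simp add: feasible_def budget_set_def)
    ultimately show ?thesis
      using c1(2,3) by (intro exI[of _ c1] exI[of _ 0]) auto
  qed
qed

lemma affine_map_phase_step_control: "affine_map (phase_step w w0 theta v)"
proof -
  have "phase_step w w0 theta v =
      (\<lambda>x. Delta w *v (\<chi> i. (\<chi> i. w0$i * v$i)$i + camp_weight theta w0 v $ i * x$i))"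
    by (simp add: phase_step_def fun_eq_iff)
  then show ?thesis
    by (simp only: affine_map_matrix_diagonal)
qed

lemma affine_map_phase_step_opinion: "affine_map (\<lambda>v. phase_step w w0 theta v x)"
proof -
  have "(\<chi> i. w0$i * v$i + camp_weight theta w0 v $ i * x$i) =
      (\<chi> i. (\<chi> i. theta$i * x$i / 2)$i + (\<chi> i. w0$i + theta$i * w0$i * x$i / 2)$i * v$i)" for v
    by (simp add: camp_weight_def vec_eq_iff field_simps)
  then have "(\<lambda>v. phase_step w w0 theta v x) =
      (\<lambda>v. Delta w *v (\<chi> i. (\<chi> i. theta$i * x$i / 2)$i + (\<chi> i. w0$i + theta$i * w0$i * x$i / 2)$i * v$i))"
    by (simp only: phase_step_def)
  then show ?thesis
    by (simp only: affine_map_matrix_diagonal)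
qed

lemma linear_sum_components: "linear (\<lambda>v::real^'n. \<Sum>i\<in>UNIV. v$i)"
  by (rule linearI) (simp_all add: sum.distrib sum_distrib_left)

lemma affine_map_objective_first: "affine_map (\<lambda>x1. objective w w0 theta v0 x1 x2)"
  unfolding objective_def opinion2_def
  by (rule affine_map_compose[OF affine_map_linear[OF linear_sum_components]
        affine_map_compose[OF affine_map_phase_step_opinion affine_map_phase_step_control]])

lemma affine_map_objective_second: "affine_map (objective w w0 theta v0 x1)"
  unfolding objective_def[abs_def] opinion2_def
  by (rule affine_map_compose[OF affine_map_linear[OF linear_sum_components]
        affine_map_phase_step_control])

lemma continuous_on_phase_step:
  assumes "continuous_on S f" and "continuous_on S g"
  shows "continuous_on S (\<lambda>p. phase_step w w0 theta (f p) (g p))"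
proof -
  have "continuous_on S (\<lambda>p. \<chi> i. w0$i * f p $ i + camp_weight theta w0 (f p) $ i * g p $ i)"
    unfolding camp_weight_def
    by (intro continuous_on_vec_lambda continuous_intros assms) simp
  then show ?thesis
    unfolding phase_step_def
    by (rule continuous_on_compose2[OF matrix_vector_mult_linear_continuous_on _ subset_UNIV])
qed

lemma continuous_on_objective:
  "continuous_on S (\<lambda>p. objective w w0 theta v0 (fst p) (snd p))"
  unfolding objective_def opinion2_def
  by (intro continuous_intros continuous_on_phase_step)

lemma compact_feasible: "compact {p. feasible kg (fst p) (snd p)}"
proof (rule compact_eq_bounded_closed[THEN iffD2], rule conjI)
  show "bounded {p. feasible kg (fst p) (snd p)}"
    unfolding bounded_iff
  proof (intro exI ballI)
    fix p :: "(real^'n) \<times> (real^'n)"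
    assume "p \<in> {p. feasible kg (fst p) (snd p)}"
    then have f: "feasible kg (fst p) (snd p)" by simp
    have "norm p \<le> norm (fst p) + norm (snd p)"
      using norm_Pair_le[of "fst p" "snd p"] by simp
    also have "\<dots> \<le> (\<Sum>i\<in>UNIV. \<bar>fst p $ i\<bar>) + (\<Sum>i\<in>UNIV. \<bar>snd p $ i\<bar>)"
      by (intro add_mono norm_le_l1_cart)
    also have "\<dots> \<le> kg"
      using f by (simp add: feasible_def)
    finally show "norm p \<le> kg" .
  qed
  show "closed {p. feasible kg (fst p) (snd p)}"
    unfolding feasible_def
    by (intro closed_Collect_conj closed_Collect_all closed_Collect_le continuous_intros)
qed

theorem lemma1:
  fixes w :: "real^'n^'n" and w0 theta v0 :: "real^'n" and kg :: real
  assumes "\<forall>i. (\<Sum>j\<in>UNIV. \<bar>w$i$j\<bar>) < 1"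
    and "kg \<ge> 0"
  shows "\<exists>x1 x2. feasible kg x1 x2 \<and>
           (\<forall>y1 y2. feasible kg y1 y2 \<longrightarrow>
              objective w w0 theta v0 y1 y2 \<le> objective w w0 theta v0 x1 x2) \<and>
           ((\<Sum>i\<in>UNIV. x1$i) + (\<Sum>i\<in>UNIV. x2$i) = kg \<or>
              ((\<Sum>i\<in>UNIV. x1$i) = 0 \<and> (\<Sum>i\<in>UNIV. x2$i) = 0)) \<and>
           card {i. x1$i \<noteq> 0} \<le> 1 \<and> card {i. x2$i \<noteq> 0} \<le> 1"
proof -
  let ?F = "objective w w0 theta v0"
  have "(0, 0) \<in> {p. feasible kg (fst p) (snd p)}"
    using assms(2) by (simp add: feasible_def)
  then obtain p where "feasible kg (fst p) (snd p)"
    and p_max: "\<forall>q\<in>{p. feasible kg (fst p) (snd p)}. ?F (fst q) (snd q) \<le> ?F (fst p) (snd p)"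
    using continuous_attains_sup[OF compact_feasible _ continuous_on_objective] by blast
  then obtain x1 x2 where "feasible kg x1 x2" and "?F (fst p) (snd p) \<le> ?F x1 x2"
    and "(\<Sum>i\<in>UNIV. x1$i) + (\<Sum>i\<in>UNIV. x2$i) = kg \<or>
              ((\<Sum>i\<in>UNIV. x1$i) = 0 \<and> (\<Sum>i\<in>UNIV. x2$i) = 0)"
    and "card {i. x1$i \<noteq> 0} \<le> 1" and "card {i. x2$i \<noteq> 0} \<le> 1"
    using separately_affine_vertex_improvement[OF affine_map_objective_first affine_map_objective_second]
    by blast
  moreover have "?F y1 y2 \<le> ?F x1 x2" if "feasible kg y1 y2" for y1 y2
    using p_max that \<open>?F (fst p) (snd p) \<le> ?F x1 x2\<close> by force
  ultimately show ?thesis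
    by blast
qed

end
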